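(* Fix integers $N\ge 2$ and $K\ge 1$. The classes $M^{\text{ComplEx}}_{KN}$ and $M^{\text{HolE}}_{2KN+1}$ are universal, i.e. $\pi(\mathcal{M}^{\text{ComplEx}}_{KN})=\pi(\mathcal{M}^{\text{HolE}}_{2KN+1})=\pi(\mathbb{R}^{N\times N\times K})$.
   Context: There are $N$ entities and $K$ relations. A score-based model assigns a score $s_k(i,j)\in\mathbb{R}$ to each triple, $i,j\in\{1,\dots,N\}$, $k\in\{1,\dots,K\}$; its scoring tensor $\mathcal{S}\in\mathbb{R}^{N\times N\times K}$ has frontal slices $\mathbf{S}_k$ with $[\mathbf{S}_k]_{ij}=s_k(i,j)$. For a real $N\times N$ matrix $\mathbf{S}$, $\pi(\mathbf{S})$ is the matrix of dense ranks: $\pi_{ij}(\mathbf{S})=1+$ (number of distinct values among entries of $\mathbf{S}$ strictly larger than $s_{ij}$). For tensors, $\pi$ acts slicewise; for a set $X$, $\pi(X)=\{\pi(x):x\in X\}$. ComplEx of size $r$: parameters $\mathbf{A}\in\mathbb{C}^{N\times r}$ (rows $\mathbf{a}_i$), $\mathbf{R}\in\mathbb{C}^{K\times r}$ (rows $\mathbf{r}_k$), score $\mathrm{Re}(\mathbf{a}_i^T\mathrm{diag}(\mathbf{r}_k)\overline{\mathbf{a}_j})$. HolE of size $r$: parameters $\mathbf{A}\in\mathbb{R}^{N\times r}$, $\mathbf{R}\in\mathbb{R}^{K\times r}$, score $\mathbf{r}_k^T(\mathbf{a}_i\star\mathbf{a}_j)$ where $(\mathbf{a}\star\mathbf{b})_m=\sum_{t=1}^r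 a_t\, b_{((m+t-2)\bmod r)+1}$ is circular correlation. $\mathcal{M}^t_r$ is the set of scoring tensors of all models of type $t$ and size $r$. *)

theory Defs
  imports Complex_Main
begin

text \<open>Conventions: entities are indexed 0..N-1, relations 0..K-1, embedding
coordinates 0..r-1. A tensor in R^{N x N x K} is a function
nat => nat => nat => real that vanishes outside the index range
(extensional representation).\<close>

type_synonym tensor = "nat \<Rightarrow> nat \<Rightarrow> nat \<Rightarrow> real"

definition restrict_tensor :: "nat \<Rightarrow> nat \<Rightarrow> tensor \<Rightarrow> tensor" where
  "restrict_tensor N K S = (\<lambda>i j k. if i < N \<and> j < N \<and> k < K then S i j k else 0)"

definition all_tensors :: "nat \<Rightarrow> nat \<Rightarrow> tensor set" where
  "all_tensors N K = {S. \<forall>i j k. \<not> (i < N \<and> j < N \<and> k < K) \<longrightarrow> S i j k = 0}"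

definition dense_rank :: "nat \<Rightarrow> (nat \<Rightarrow> nat \<Rightarrow> real) \<Rightarrow> nat \<Rightarrow> nat \<Rightarrow> nat" where
  "dense_rank N M i j = 1 + card {v. (\<exists>i' j'. i' < N \<and> j' < N \<and> v = M i' j') \<and> v > M i j}"

text \<open>pi acting slicewise on an N x N x K tensor (0 outside the index range).\<close>
definition rank_tensor :: "nat \<Rightarrow> nat \<Rightarrow> tensor \<Rightarrow> (nat \<Rightarrow> nat \<Rightarrow> nat \<Rightarrow> nat)" where
  "rank_tensor N K S = (\<lambda>i j k. if i < N \<and> j < N \<and> k < K
      then dense_rank N (\<lambda>a b. S a b k) i j else 0)"

definition complex_tensor :: "nat \<Rightarrow> nat \<Rightarrow> nat \<Rightarrow> (nat \<Rightarrow> nat \<Rightarrow> complex)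
    \<Rightarrow> (nat \<Rightarrow> nat \<Rightarrow> complex) \<Rightarrow> tensor" where
  "complex_tensor N K r A R = restrict_tensor N K
     (\<lambda>i j k. Re (\<Sum>t<r. A i t * R k t * cnj (A j t)))"

definition ComplEx_models :: "nat \<Rightarrow> nat \<Rightarrow> nat \<Rightarrow> tensor set" where
  "ComplEx_models N K r = {complex_tensor N K r A R | A R. True}"

definition circ_corr :: "nat \<Rightarrow> (nat \<Rightarrow> real) \<Rightarrow> (nat \<Rightarrow> real) \<Rightarrow> nat \<Rightarrow> real" where
  "circ_corr r a b m = (\<Sum>t<r. a t * b ((m + t) mod r))"

definition hole_tensor :: "nat \<Rightarrow> nat \<Rightarrow> nat \<Rightarrow> (nat \<Rightarrow> nat \<Rightarrow> real)
    \<Rightarrow> (nat \<Rightarrow> nat \<Rightarrow> real) \<Rightarrow> tensor" where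
  "hole_tensor N K r A R = restrict_tensor N K
     (\<lambda>i j k. \<Sum>m<r. R k m * circ_corr r (A i) (A j) m)"

definition HolE_models :: "nat \<Rightarrow> nat \<Rightarrow> nat \<Rightarrow> tensor set" where
  "HolE_models N K r = {hole_tensor N K r A R | A R. True}"

end

theory Submission
  imports Defs
begin

text \<open>Every real square matrix X is the real part of a matrix A diag(c) A^*
  with complex A and c; this is proved by a symmetric Gaussian elimination, peeling off one
  rank-one term c v v^* per row and using congruences to create a nonzero pivot.
  Taking such a factorisation slice by slice and placing the K factors in disjoint blocks of
  coordinates gives every tensor as a ComplEx model of size KN.
  For HolE, the discrete Fourier transform diagonalises circular correlation; feeding it the
  Fourier transforms of Hermitian extensions (which are real) of a ComplEx model of size L
  reproduces that model, up to a constant factor, with a HolE model of size 2L+1.\<close>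

definition re_diag_factorizable :: "nat \<Rightarrow> (nat \<Rightarrow> nat \<Rightarrow> real) \<Rightarrow> bool" where
  "re_diag_factorizable n X \<longleftrightarrow>
     (\<exists>A c. \<forall>i<n. \<forall>j<n. X i j = Re (\<Sum>m<n. A i m * c m * cnj (A j m)))"

lemma re_diag_factorizable_Suc_pivot:
  assumes pivot: "\<forall>j<n. X n n \<noteq> 0 \<or> X n j + X j n = 0"
    and IH: "\<And>Y. re_diag_factorizable n Y"
  shows "re_diag_factorizable (Suc n) X"
proof -
  define d where "d = X n n"
  define c where "c = Complex d 1"
  text \<open>With these choices Re (c cnj(v j)) = X n j and Re (c v j) = X j n; when d = 0 the
    pivot hypothesis makes the numerator X n j + X j n vanish, so the division by d is harmless.\<close>
  define v where "v j = Complex ((X n j + X j n) / (2 * d)) ((X n j - X j n) / 2)" for j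
  define Y where "Y i j = X i j - Re (c * v i * cnj (v j))" for i j
  obtain A0 c0 where Y: "\<forall>i<n. \<forall>j<n. Y i j = Re (\<Sum>m<n. A0 i m * c0 m * cnj (A0 j m))"
    using IH[of Y] unfolding re_diag_factorizable_def by blast
  define A where "A i m = (if m = n then (if i = n then 1 else v i)
                           else if i = n then 0 else A0 i m)" for i m
  define cc where "cc m = (if m = n then c else c0 m)" for m
  have d_v: "d * ((X n j + X j n) / (2 * d)) = (X n j + X j n) / 2" if "j < n" for j
    using pivot that unfolding d_def by (cases "X n n = 0") auto
  have last_row: "Re (c * cnj (v j)) = X n j" and last_col: "Re (c * v j) = X j n"
    if "j < n" for j
    using d_v[OF that] by (simp_all add: c_def v_def field_simps)
  have "X i j = Re (\<Sum>m<Suc n. A i m * cc m * cnj (A j m))"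
    if i: "i < Suc n" and j: "j < Suc n" for i j
  proof -
    have upper_block: "(\<Sum>m<n. A i m * cc m * cnj (A j m)) =
        (if i = n \<or> j = n then 0 else \<Sum>m<n. A0 i m * c0 m * cnj (A0 j m))"
      unfolding A_def cc_def by (auto intro!: sum.cong)
    consider "i = n" "j = n" | "i = n" "j < n" | "i < n" "j = n" | "i < n" "j < n"
      using i j by (metis less_SucE)
    then show ?thesis
    proof cases
      case 4
      have "X i j = Y i j + Re (c * v i * cnj (v j))" unfolding Y_def by simp
      then show ?thesis using 4 Y upper_block by (simp add: A_def cc_def mult.commute)
    qed (use upper_block last_row last_col in \<open>simp_all add: A_def cc_def c_def d_def mult.commute\<close>)
  qed
  then show ?thesis unfolding re_diag_factorizable_def by blast
qed

text \<open>Adding t times row and column j to row and column n is a congruence X \<mapsto> E X E^T,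
  which preserves factorisability (replace A by E^-1 A).\<close>
lemma re_diag_factorizable_Suc_congruence:
  assumes j: "j < n"
    and fac: "re_diag_factorizable (Suc n) (\<lambda>a b. X a b + (if a = n then t * X j b else 0)
      + (if b = n then t * X a j else 0) + (if a = n \<and> b = n then t\<^sup>2 * X j j else 0))"
      (is "re_diag_factorizable _ ?X'")
  shows "re_diag_factorizable (Suc n) X"
proof -
  obtain B c where B: "\<forall>a<Suc n. \<forall>b<Suc n. ?X' a b = Re (\<Sum>m<Suc n. B a m * c m * cnj (B b m))"
    using fac unfolding re_diag_factorizable_def by blast
  define G where "G a b = (\<Sum>m<Suc n. B a m * c m * cnj (B b m))" for a b
  have G: "Re (G a b) = ?X' a b" if "a < Suc n" "b < Suc n" for a b
    using B that unfolding G_def by auto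
  define A where "A a m = (if a = n then B n m - of_real t * B j m else B a m)" for a m
  have row: "(\<Sum>m<Suc n. A n m * c m * cnj (B b m)) = G n b - of_real t * G j b" for b
    unfolding A_def G_def by (simp add: algebra_simps sum_subtractf sum_distrib_left)
  have col: "(\<Sum>m<Suc n. B a m * c m * cnj (A n m)) = G a n - of_real t * G a j" for a
    unfolding A_def G_def by (simp add: algebra_simps sum_subtractf sum_distrib_left)
  have corner: "(\<Sum>m<Suc n. A n m * c m * cnj (A n m))
      = G n n - of_real t * G j n - of_real t * G n j + of_real (t\<^sup>2) * G j j"
    unfolding A_def G_def
    by (simp add: algebra_simps sum_subtractf sum_distrib_left sum.distrib power2_eq_square)
  have A_unchanged: "A a = B a" if "a \<noteq> n" for a
    using that by (auto simp: A_def)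
  have "X a b = Re (\<Sum>m<Suc n. A a m * c m * cnj (A b m))" if a: "a < Suc n" and b: "b < Suc n" for a b
  proof -
    consider "a = n" "b = n" | "a = n" "b < n" | "a < n" "b = n" | "a < n" "b < n"
      using a b by (metis less_SucE)
    then show ?thesis
    proof cases
      case 1
      have "Re (\<Sum>m<Suc n. A n m * c m * cnj (A n m))
          = Re (G n n) - t * Re (G j n) - t * Re (G n j) + t\<^sup>2 * Re (G j j)"
        unfolding corner by simp
      then show ?thesis using 1 G[of n n] G[of j n] G[of n j] G[of j j] j
        by (simp add: power2_eq_square algebra_simps)
    next
      case 2
      then show ?thesis using row[of b] G[of n b] G[of j b] j A_unchanged[of b] by simp
    next
      case 3
      then show ?thesis using col[of a] G[of a n] G[of a j] j A_unchanged[of a] by simp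
    next
      case 4
      then show ?thesis using G[of a b] A_unchanged[of a] A_unchanged[of b] unfolding G_def by simp
    qed
  qed
  then show ?thesis unfolding re_diag_factorizable_def by blast
qed

lemma re_diag_factorizable: "re_diag_factorizable n X"
proof (induction n arbitrary: X)
  case 0
  then show ?case unfolding re_diag_factorizable_def by simp
next
  case (Suc n)
  show ?case
  proof (cases "\<forall>j<n. X n n \<noteq> 0 \<or> X n j + X j n = 0")
    case True
    then show ?thesis using re_diag_factorizable_Suc_pivot Suc.IH by blast
  next
    case False
    then obtain j where j: "j < n" and "X n n = 0" and "X n j + X j n \<noteq> 0" by blast
    text \<open>After the congruence the pivot becomes t (X n j + X j n) + t^2 X j j,
      which is nonzero for t = 1 or t = -1.\<close>
    define t :: real where "t = (if X n j + X j n + X j j \<noteq> 0 then 1 else -1)"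
    let ?X' = "\<lambda>a b. X a b + (if a = n then t * X j b else 0)
      + (if b = n then t * X a j else 0) + (if a = n \<and> b = n then t\<^sup>2 * X j j else 0)"
    have "?X' n n \<noteq> 0"
      using \<open>X n n = 0\<close> \<open>X n j + X j n \<noteq> 0\<close> unfolding t_def by (auto simp: algebra_simps)
    then have "re_diag_factorizable (Suc n) ?X'"
      by (intro re_diag_factorizable_Suc_pivot Suc.IH) simp
    then show ?thesis using re_diag_factorizable_Suc_congruence[OF j] by blast
  qed
qed

lemma restrict_tensor_in_all_tensors: "restrict_tensor N K F \<in> all_tensors N K"
  unfolding all_tensors_def restrict_tensor_def by simp

lemma all_tensors_eq_restrict_tensor:
  assumes "S \<in> all_tensors N K"
    and "\<And>i j k. i < N \<Longrightarrow> j < N \<Longrightarrow> k < K \<Longrightarrow> S i j k = F i j k"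
  shows "S = restrict_tensor N K F"
  using assms unfolding all_tensors_def restrict_tensor_def by (intro ext) auto

lemma sum_lessThan_mult_single_block:
  fixes f :: "nat \<Rightarrow> 'a::comm_monoid_add"
  assumes k: "k < K" and supp: "\<And>t. t div N \<noteq> k \<Longrightarrow> f t = 0"
  shows "(\<Sum>t<K * N. f t) = (\<Sum>m<N. f (k * N + m))"
proof -
  have block: "(\<Sum>t\<in>{k' * N..<k' * N + N}. f t) = (if k' = k then \<Sum>m<N. f (k * N + m) else 0)"
    for k'
  proof (cases "k' = k")
    case True
    then show ?thesis
      using sum.shift_bounds_nat_ivl[of f 0 "k * N" N] by (simp add: atLeast0LessThan add.commute)
  next
    case False
    have "t div N = k'" if "t \<in> {k' * N..<k' * N + N}" for t
      using that by (auto intro: div_nat_eqI simp: mult.commute)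
    then show ?thesis using False supp by simp
  qed
  have "(\<Sum>t<K * N. f t) = (\<Sum>k'<K. \<Sum>t\<in>{k' * N..<k' * N + N}. f t)"
    by (rule sum.nat_group[symmetric])
  also have "\<dots> = (\<Sum>m<N. f (k * N + m))"
    unfolding block using k by simp
  finally show ?thesis .
qed

lemma complex_block_factorization:
  fixes S :: tensor
  assumes "0 < N"
  shows "\<exists>A R. \<forall>i<N. \<forall>j<N. \<forall>k<K. S i j k = Re (\<Sum>t<K * N. A i t * R k t * cnj (A j t))"
proof -
  have "\<forall>k. \<exists>A c. \<forall>i<N. \<forall>j<N. S i j k = Re (\<Sum>m<N. A i m * c m * cnj (A j m))"
    using re_diag_factorizable[of N "\<lambda>i j. S i j k" for k] unfolding re_diag_factorizable_def by simp
  from choice[OF this] obtain Af where "\<forall>k. \<exists>c. \<forall>i<N. \<forall>j<N.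
      S i j k = Re (\<Sum>m<N. Af k i m * c m * cnj (Af k j m))"
    by blast
  from choice[OF this] obtain cf where F: "\<And>k i j. i < N \<Longrightarrow> j < N \<Longrightarrow>
      S i j k = Re (\<Sum>m<N. Af k i m * cf k m * cnj (Af k j m))"
    by blast
  define A where "A i t = Af (t div N) i (t mod N)" for i t
  define R where "R k t = (if t div N = k then cf k (t mod N) else 0)" for k t
  have "S i j k = Re (\<Sum>t<K * N. A i t * R k t * cnj (A j t))" if "i < N" "j < N" "k < K" for i j k
  proof -
    have "(\<Sum>t<K * N. A i t * R k t * cnj (A j t))
        = (\<Sum>m<N. A i (k * N + m) * R k (k * N + m) * cnj (A j (k * N + m)))"
      by (rule sum_lessThan_mult_single_block[OF \<open>k < K\<close>]) (simp add: R_def)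
    also have "\<dots> = (\<Sum>m<N. Af k i m * cf k m * cnj (Af k j m))"
      using \<open>0 < N\<close> by (intro sum.cong) (auto simp: A_def R_def)
    finally show ?thesis using F that by simp
  qed
  then show ?thesis by blast
qed

lemma ComplEx_models_eq_all_tensors:
  assumes "0 < N"
  shows "ComplEx_models N K (K * N) = all_tensors N K"
proof
  show "ComplEx_models N K (K * N) \<subseteq> all_tensors N K"
    unfolding ComplEx_models_def complex_tensor_def using restrict_tensor_in_all_tensors by blast
next
  show "all_tensors N K \<subseteq> ComplEx_models N K (K * N)"
  proof
    fix S assume S: "S \<in> all_tensors N K"
    obtain A R where "\<forall>i<N. \<forall>j<N. \<forall>k<K. S i j k = Re (\<Sum>t<K * N. A i t * R k t * cnj (A j t))"
      using complex_block_factorization[OF assms] by blast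
    then have "S = complex_tensor N K (K * N) A R"
      unfolding complex_tensor_def by (intro all_tensors_eq_restrict_tensor[OF S]) simp
    then show "S \<in> ComplEx_models N K (K * N)" unfolding ComplEx_models_def by blast
  qed
qed

definition unit_root :: "nat \<Rightarrow> complex" where
  "unit_root r = cis (2 * pi / real r)"

lemma unit_root_pow: "unit_root r ^ n = cis (2 * pi * real n / real r)"
  by (simp add: unit_root_def DeMoivre mult_ac)

lemma unit_root_pow_mod:
  assumes "0 < r"
  shows "unit_root r ^ (n mod r) = unit_root r ^ n"
proof -
  have "unit_root r ^ r = 1" using assms by (simp add: unit_root_pow)
  then have "unit_root r ^ n = (unit_root r ^ r) ^ (n div r) * unit_root r ^ (n mod r)"
    by (metis div_mult_mod_eq mult.commute power_add power_mult)
  also have "\<dots> = unit_root r ^ (n mod r)" using \<open>unit_root r ^ r = 1\<close> by simp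
  finally show ?thesis by simp
qed

lemma unit_root_pow_eq_1_iff:
  assumes "0 < r"
  shows "unit_root r ^ n = 1 \<longleftrightarrow> r dvd n"
proof -
  have inj: "inj_on (\<lambda>k. cis (2 * pi * real k / real r)) {..<r}"
    using bij_betw_roots_unity[OF assms] by (auto simp: bij_betw_def)
  have "unit_root r ^ n = cis (2 * pi * real (n mod r) / real r)"
    using unit_root_pow_mod[OF assms, of n] unit_root_pow[of r "n mod r"] by simp
  then have "unit_root r ^ n = 1 \<longleftrightarrow>
      cis (2 * pi * real (n mod r) / real r) = cis (2 * pi * real 0 / real r)"
    by simp
  also have "\<dots> \<longleftrightarrow> n mod r = 0"
    using inj_onD[OF inj, of "n mod r" 0] assms by auto
  finally show ?thesis by (simp add: dvd_eq_mod_eq_0)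
qed

lemma sum_unit_root_pow:
  assumes "0 < r"
  shows "(\<Sum>t<r. unit_root r ^ (n * t)) = (if r dvd n then of_nat r else 0)"
proof -
  have "(\<Sum>t<r. unit_root r ^ (n * t)) = (\<Sum>t<r. (unit_root r ^ n) ^ t)"
    by (simp add: power_mult)
  moreover have "(unit_root r ^ n) ^ r = 1"
    using unit_root_pow_eq_1_iff[OF assms, of "n * r"] by (simp add: power_mult)
  ultimately show ?thesis
    using unit_root_pow_eq_1_iff[OF assms, of n] by (simp add: sum_gp_strict)
qed

lemma dvd_add_iff_eq_neg_mod:
  fixes f g r :: nat
  assumes f: "f < r" and g: "g < r"
  shows "r dvd (f + g) \<longleftrightarrow> f = (r - g) mod r"
proof -
  have rg: "(r - g) mod r = (if g = 0 then 0 else r - g)" using g by auto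
  show ?thesis
  proof (cases "f + g < r")
    case True
    then have "r dvd (f + g) \<longleftrightarrow> f + g = 0" by (auto dest: dvd_imp_le)
    then show ?thesis using rg True by auto
  next
    case False
    then have "r dvd (f + g) \<longleftrightarrow> r dvd (f + g - r)" by (simp add: dvd_minus_self)
    also have "\<dots> \<longleftrightarrow> f + g - r = 0" using f g by (auto dest: dvd_imp_le)
    finally show ?thesis using rg False f g by auto
  qed
qed

lemma cnj_unit_root_pow:
  assumes "0 < r" and "g < r"
  shows "cnj (unit_root r ^ (g * t)) = unit_root r ^ (((r - g) mod r) * t)"
proof -
  have "r dvd ((r - g) mod r + g)" using \<open>g < r\<close> by (cases "g = 0") auto
  then have "unit_root r ^ (((r - g) mod r + g) * t) = 1"
    using unit_root_pow_eq_1_iff[OF assms(1)] by simp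
  then have "unit_root r ^ (g * t) * unit_root r ^ (((r - g) mod r) * t) = 1"
    by (metis add.commute add_mult_distrib power_add)
  then have "inverse (unit_root r ^ (g * t)) = unit_root r ^ (((r - g) mod r) * t)"
    by (rule inverse_unique)
  moreover have "cnj (unit_root r ^ (g * t)) = inverse (unit_root r ^ (g * t))"
    by (simp add: unit_root_pow cis_cnj)
  ultimately show ?thesis by simp
qed

definition dft :: "nat \<Rightarrow> (nat \<Rightarrow> complex) \<Rightarrow> nat \<Rightarrow> complex" where
  "dft r c t = (\<Sum>g<r. c g * unit_root r ^ (g * t))"

lemma dft_inversion:
  assumes r: "0 < r" and g: "g < r"
  shows "(\<Sum>t<r. dft r c t * unit_root r ^ (g * t)) = of_nat r * c ((r - g) mod r)"
proof -
  have "(\<Sum>t<r. dft r c t * unit_root r ^ (g * t))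
      = (\<Sum>t<r. \<Sum>f<r. c f * unit_root r ^ ((f + g) * t))"
    unfolding dft_def sum_distrib_right by (simp add: power_add algebra_simps)
  also have "\<dots> = (\<Sum>f<r. c f * (\<Sum>t<r. unit_root r ^ ((f + g) * t)))"
    by (subst sum.swap) (simp add: sum_distrib_left)
  also have "\<dots> = (\<Sum>f<r. if f = (r - g) mod r then c f * of_nat r else 0)"
    using dvd_add_iff_eq_neg_mod[OF _ g] by (intro sum.cong refl) (auto simp: sum_unit_root_pow[OF r])
  also have "\<dots> = of_nat r * c ((r - g) mod r)"
    using r by (simp add: sum.delta mult.commute)
  finally show ?thesis .
qed

lemma dft_add_mod:
  assumes "0 < r"
  shows "dft r c ((m + t) mod r) = (\<Sum>g<r. c g * unit_root r ^ (g * m) * unit_root r ^ (g * t))"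
  unfolding dft_def
proof (intro sum.cong refl)
  fix g
  have "unit_root r ^ (g * ((m + t) mod r)) = unit_root r ^ ((g * (m + t)) mod r)"
    by (metis mod_mult_right_eq unit_root_pow_mod[OF assms])
  also have "\<dots> = unit_root r ^ (g * m) * unit_root r ^ (g * t)"
    by (simp add: unit_root_pow_mod[OF assms] power_add algebra_simps)
  finally show "c g * unit_root r ^ (g * ((m + t) mod r))
      = c g * unit_root r ^ (g * m) * unit_root r ^ (g * t)" by simp
qed

text \<open>The convolution theorem for the HolE score: in Fourier coordinates circular
  correlation becomes a trilinear diagonal form.\<close>
lemma hole_score_dft:
  assumes r: "0 < r"
  shows "(\<Sum>m<r. dft r p m * (\<Sum>t<r. dft r a t * dft r b ((m + t) mod r)))
     = (\<Sum>g<r. b g * (of_nat r * a ((r - g) mod r)) * (of_nat r * p ((r - g) mod r)))"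
proof -
  have corr: "(\<Sum>t<r. dft r a t * dft r b ((m + t) mod r))
      = (\<Sum>g<r. (b g * (of_nat r * a ((r - g) mod r))) * unit_root r ^ (g * m))" for m
  proof -
    have "(\<Sum>t<r. dft r a t * dft r b ((m + t) mod r))
        = (\<Sum>t<r. \<Sum>g<r. (b g * unit_root r ^ (g * m)) * (dft r a t * unit_root r ^ (g * t)))"
      unfolding dft_add_mod[OF r] sum_distrib_left by (intro sum.cong refl) (simp add: mult_ac)
    also have "\<dots> = (\<Sum>g<r. (b g * unit_root r ^ (g * m)) * (\<Sum>t<r. dft r a t * unit_root r ^ (g * t)))"
      by (subst sum.swap) (simp add: sum_distrib_left)
    finally show ?thesis by (simp add: dft_inversion[OF r] mult_ac)
  qed
  have "(\<Sum>m<r. dft r p m * (\<Sum>t<r. dft r a t * dft r b ((m + t) mod r)))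
     = (\<Sum>g<r. (b g * (of_nat r * a ((r - g) mod r))) * (\<Sum>m<r. dft r p m * unit_root r ^ (g * m)))"
    unfolding corr sum_distrib_left by (subst sum.swap) (simp add: sum_distrib_left mult_ac)
  also have "\<dots> = (\<Sum>g<r. b g * (of_nat r * a ((r - g) mod r)) * (of_nat r * p ((r - g) mod r)))"
    by (intro sum.cong refl) (simp add: dft_inversion[OF r])
  finally show ?thesis .
qed

definition hermitian_ext :: "nat \<Rightarrow> (nat \<Rightarrow> complex) \<Rightarrow> nat \<Rightarrow> complex" where
  "hermitian_ext L a g = (if g = 0 then 0 else if g \<le> L then a (g - 1) else cnj (a (2 * L - g)))"

lemma hermitian_ext_neg_mod:
  assumes "g < 2 * L + 1"
  shows "hermitian_ext L a ((2 * L + 1 - g) mod (2 * L + 1)) = cnj (hermitian_ext L a g)"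
proof (cases "g = 0")
  case False
  then have "(2 * L + 1 - g) mod (2 * L + 1) = 2 * L + 1 - g" using assms by simp
  then show ?thesis using assms False unfolding hermitian_ext_def by (auto simp: Suc_diff_le)
qed (simp add: hermitian_ext_def)

lemma sum_neg_mod_reindex:
  fixes F :: "nat \<Rightarrow> 'a::comm_monoid_add"
  assumes "0 < r"
  shows "(\<Sum>g<r. F ((r - g) mod r)) = (\<Sum>g<r. F g)"
proof -
  have "(r - (r - g) mod r) mod r = g" if "g < r" for g
    using that by (cases "g = 0") auto
  then show ?thesis
    by (intro sum.reindex_bij_witness[where i = "\<lambda>g. (r - g) mod r" and j = "\<lambda>g. (r - g) mod r"])
      (use assms in auto)
qed

lemma dft_hermitian_ext_real: "dft (2 * L + 1) (hermitian_ext L a) t \<in> \<real>"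
proof -
  define r where "r = 2 * L + 1"
  have r: "0 < r" unfolding r_def by simp
  have "cnj (dft r (hermitian_ext L a) t)
      = (\<Sum>g<r. hermitian_ext L a ((r - g) mod r) * unit_root r ^ (((r - g) mod r) * t))"
    unfolding dft_def cnj_sum
  proof (intro sum.cong refl)
    fix g assume "g \<in> {..<r}"
    then have "g < r" by simp
    then show "cnj (hermitian_ext L a g * unit_root r ^ (g * t))
        = hermitian_ext L a ((r - g) mod r) * unit_root r ^ (((r - g) mod r) * t)"
      unfolding complex_cnj_mult cnj_unit_root_pow[OF r \<open>g < r\<close>]
      using hermitian_ext_neg_mod[of g L a] by (simp add: r_def)
  qed
  also have "\<dots> = dft r (hermitian_ext L a) t"
    unfolding dft_def
    by (rule sum_neg_mod_reindex[OF r, where F = "\<lambda>g. hermitian_ext L a g * unit_root r ^ (g * t)"])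
  finally show ?thesis unfolding r_def Reals_cnj_iff .
qed

lemma sum_lessThan_add:
  fixes F :: "nat \<Rightarrow> 'a::comm_monoid_add"
  shows "(\<Sum>g<a + b. F g) = (\<Sum>g<a. F g) + (\<Sum>g<b. F (a + g))"
  by (induction b) (simp_all add: add_ac)

lemma sum_hermitian_ext:
  "(\<Sum>g<2 * L + 1. hermitian_ext L a g * hermitian_ext L p g * cnj (hermitian_ext L b g))
    = (\<Sum>f<L. a f * p f * cnj (b f) + cnj (a f * p f * cnj (b f)))"
proof -
  define F where "F g = hermitian_ext L a g * hermitian_ext L p g * cnj (hermitian_ext L b g)" for g
  have "(\<Sum>g<Suc (L + L). F g) = F 0 + (\<Sum>g<L + L. F (Suc g))"
    by (rule sum.lessThan_Suc_shift)
  also have "\<dots> = (\<Sum>g<L. F (Suc g)) + (\<Sum>g<L. F (Suc (L + g)))"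
    by (simp add: sum_lessThan_add F_def hermitian_ext_def)
  also have "(\<Sum>g<L. F (Suc g)) = (\<Sum>f<L. a f * p f * cnj (b f))"
    by (intro sum.cong refl) (simp add: F_def hermitian_ext_def)
  also have "(\<Sum>g<L. F (Suc (L + g)))
      = (\<Sum>g<L. cnj (a (L - Suc g) * p (L - Suc g) * cnj (b (L - Suc g))))"
  proof (intro sum.cong refl)
    fix g assume "g \<in> {..<L}"
    then have "2 * L - Suc (L + g) = L - Suc g" by simp
    then show "F (Suc (L + g)) = cnj (a (L - Suc g) * p (L - Suc g) * cnj (b (L - Suc g)))"
      unfolding F_def hermitian_ext_def by simp
  qed
  also have "\<dots> = (\<Sum>f<L. cnj (a f * p f * cnj (b f)))"
    by (rule sum.nat_diff_reindex)
  finally show ?thesis unfolding F_def by (simp add: sum.distrib mult_2)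
qed

lemma hole_score_hermitian_ext:
  fixes L :: nat and a b p :: "nat \<Rightarrow> complex"
  defines "r \<equiv> 2 * L + 1"
  defines "\<phi> c t \<equiv> Re (dft r (hermitian_ext L c) t)"
  shows "(\<Sum>m<r. \<phi> p m * (\<Sum>t<r. \<phi> a t * \<phi> b ((m + t) mod r)))
      = 2 * real r * real r * Re (\<Sum>f<L. a f * p f * cnj (b f))"
proof -
  have r: "0 < r" unfolding r_def by simp
  have \<phi>: "complex_of_real (\<phi> c t) = dft r (hermitian_ext L c) t" for c t
    unfolding \<phi>_def r_def by (rule of_real_Re[OF dft_hermitian_ext_real])
  define S where "S = (\<Sum>f<L. a f * p f * cnj (b f))"
  define lhs where "lhs = (\<Sum>m<r. \<phi> p m * (\<Sum>t<r. \<phi> a t * \<phi> b ((m + t) mod r)))"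
  have "complex_of_real lhs
      = (\<Sum>g<r. hermitian_ext L b g * (of_nat r * hermitian_ext L a ((r - g) mod r))
                * (of_nat r * hermitian_ext L p ((r - g) mod r)))"
    unfolding lhs_def of_real_sum of_real_mult \<phi> by (rule hole_score_dft[OF r])
  also have "\<dots> = of_nat r * of_nat r * cnj (\<Sum>g<r. hermitian_ext L a g * hermitian_ext L p g
                                                  * cnj (hermitian_ext L b g))"
    unfolding sum_distrib_left cnj_sum
  proof (intro sum.cong refl)
    fix g assume "g \<in> {..<r}"
    then have "hermitian_ext L c ((r - g) mod r) = cnj (hermitian_ext L c g)" for c
      using hermitian_ext_neg_mod unfolding r_def by simp
    then show "hermitian_ext L b g * (of_nat r * hermitian_ext L a ((r - g) mod r))
          * (of_nat r * hermitian_ext L p ((r - g) mod r))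
        = of_nat r * of_nat r * cnj (hermitian_ext L a g * hermitian_ext L p g * cnj (hermitian_ext L b g))"
      by (simp add: mult_ac)
  qed
  also have "\<dots> = of_nat r * of_nat r * (cnj S + S)"
    unfolding r_def sum_hermitian_ext S_def sum.distrib by simp
  finally have "lhs = Re (of_nat r * of_nat r * (cnj S + S))"
    by (metis Re_complex_of_real)
  also have "\<dots> = 2 * real r * real r * Re S" by simp
  finally show ?thesis unfolding lhs_def S_def .
qed

lemma HolE_models_eq_all_tensors:
  assumes "0 < N"
  shows "HolE_models N K (2 * K * N + 1) = all_tensors N K"
proof
  show "HolE_models N K (2 * K * N + 1) \<subseteq> all_tensors N K"
    unfolding HolE_models_def hole_tensor_def using restrict_tensor_in_all_tensors by blast
next
  show "all_tensors N K \<subseteq> HolE_models N K (2 * K * N + 1)"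
  proof
    fix S assume S: "S \<in> all_tensors N K"
    define L where "L = K * N"
    define r where "r = 2 * L + 1"
    obtain Ac Rc where fac:
      "\<forall>i<N. \<forall>j<N. \<forall>k<K. S i j k = Re (\<Sum>t<L. Ac i t * Rc k t * cnj (Ac j t))"
      using complex_block_factorization[OF assms] unfolding L_def by blast
    define c :: real where "c = 2 * real r * real r"
    have "c \<noteq> 0" unfolding c_def r_def by simp
    define A where "A i t = Re (dft r (hermitian_ext L (Ac i)) t)" for i t
    define R where "R k m = Re (dft r (hermitian_ext L (\<lambda>f. Rc k f / of_real c)) m)" for k m
    have "S i j k = (\<Sum>m<r. R k m * circ_corr r (A i) (A j) m)"
      if "i < N" "j < N" "k < K" for i j k
    proof -
      have "(\<Sum>m<r. R k m * circ_corr r (A i) (A j) m)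
          = c * Re (\<Sum>f<L. Ac i f * (Rc k f / of_real c) * cnj (Ac j f))"
        unfolding R_def A_def circ_corr_def r_def c_def by (rule hole_score_hermitian_ext)
      also have "\<dots> = c * Re ((\<Sum>f<L. Ac i f * Rc k f * cnj (Ac j f)) / of_real c)"
        unfolding sum_divide_distrib by (simp add: mult_ac)
      also have "\<dots> = Re (\<Sum>f<L. Ac i f * Rc k f * cnj (Ac j f))"
        using \<open>c \<noteq> 0\<close> by (simp only: Re_divide_of_real) simp
      finally show ?thesis using fac that by simp
    qed
    then have "S = hole_tensor N K r A R"
      unfolding hole_tensor_def by (intro all_tensors_eq_restrict_tensor[OF S])
    then show "S \<in> HolE_models N K (2 * K * N + 1)"
      unfolding HolE_models_def r_def L_def by (auto simp: mult.assoc)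
  qed
qed

theorem theorem7:
  fixes N K :: nat
  assumes "N \<ge> 2" and "K \<ge> 1"
  shows "rank_tensor N K ` ComplEx_models N K (K * N) = rank_tensor N K ` all_tensors N K
       \<and> rank_tensor N K ` HolE_models N K (2 * K * N + 1) = rank_tensor N K ` all_tensors N K"
proof -
  have "0 < N" using assms by simp
  then show ?thesis
    using ComplEx_models_eq_all_tensors HolE_models_eq_all_tensors by simp
qed

end
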